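(* Let $G$ be an abelian, second countable, locally compact group with Haar measure $\mu$ and $(\Lambda_n)$ a F\o lner sequence in $G$. Let $(A,\omega,\tau,G)$ be a C*-dynamical system which is $M$-asymptotically abelian relative to $(\Lambda_n)$, with $M\subset\mathrm{Hom}(G)$ translational. Set $\varphi_0(g)=e$ for all $g\in G$. Assume that for some $k\in\mathbb{N}$, \[ \lim_{n\to\infty}\frac{1}{\mu(\Lambda_n)}\int_{\Lambda_n}\omega\left(\prod_{j=0}^{k-1}\tau_{\varphi_j(g)}(a_j)\right)dg=\prod_{j=0}^{k-1}\omega(a_j) \] (in particular that the limit exists) for all $a_0,\dots,a_{k-1}\in A$ and all $\varphi_1,\dots,\varphi_{k-1}\in M$ with $\varphi_j\neq\varphi_l$ whenever $j\ne l$. Given $a_1,\dots,a_k\in A$ and $\varphi_1,\dots,\varphi_k\in M$ with $\varphi_j\ne\varphi_l$ whenever $j\ne l$, set $\kappa:=\prod_{j=1}^k\omega(a_j)$ and \[ u_h:=\iota\left(\prod_{j=1}^k\tau_{\varphi_j(h)}(a_j)\right)-\kappa\Omega\quad(h\in G). \] Then $\gamma_h:=\lim_{n\to\infty}\frac{1}{\mu(\Lambda_n)}\int_{\Lambda_n}\langle u_g,u_{gh}\rangle\,dg$ exists and \[ \gamma_h=\prod_{j=1}^k\omega\left(a_j^*\tau_{\varphi_j(h)}(a_j)\right)-|\kappa|^2 \] for all $h\in G$.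
   Context: $G$ is written multiplicatively with identity $e$; $\mathrm{Hom}(G)$ is the set of group homomorphisms $G\to G$. A F\o lner sequence is a sequence $(\Lambda_n)$ of compact subsets with $\mu(\Lambda_n)>0$ and $\lim_n\mu(\Lambda_n\,\Delta\,(\Lambda_ng))/\mu(\Lambda_n)=0$ for all $g$. A C*-dynamical system $(A,\omega,\tau,G)$: $A$ a unital C*-algebra, $\omega$ a state, $\tau_g$ $*$-automorphisms with $\tau_g\tau_h=\tau_{gh}$, $\tau_e=\mathrm{id}$, $g\mapsto\omega(a\tau_g(b))$ Borel measurable, $\omega\circ\tau_g=\omega$. It is $M$-asymptotically abelian relative to $(\Lambda_n)$ if $g\mapsto\tau_{\varphi(g)}(b)$ is continuous and $\lim_n\frac{1}{\mu(\Lambda_n)}\int_{\Lambda_n}\|a\tau_{\varphi(g)}(b)-\tau_{\varphi(g)}(b)a\|\,dg=0$ for all $a,b\in A$, $\varphi\in M$. $M$ is translational if for $\varphi_1\ne\varphi_2$ in $M$, $g\mapsto\varphi_2(g)^{-1}\varphi_1(g)$ is in $M$. $(H,\iota)$ is a GNS representation of $(A,\omega)$: $H$ a Hilbert space and $\iota:A\to H$ linear with dense range and $\langle\iota(a),\iota(b)\rangle=\omega(a^*b)$; $\Omega:=\iota(1)$. Inner products are conjugate linear in the first slot; $\prod_{j=0}^k b_j=b_0\cdots b_k$ in order. *)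

theory Defs
  imports "HOL-Analysis.Analysis"
begin

text \<open>The abelian group G is written additively (group operation +, identity 0,
  inverse uminus); this is only a change of notation for an abelian group.\<close>

text \<open>Haar measure on a (second countable, locally compact Hausdorff) abelian group:
  a Borel measure, finite on compact sets, positive on nonempty open sets,
  and translation invariant.  (On a second countable locally compact Hausdorff
  space such a measure is automatically regular / Radon.)\<close>
definition haar_measure :: "'g::topological_ab_group_add measure \<Rightarrow> bool" where
  "haar_measure \<mu> \<longleftrightarrow>
     sets \<mu> = sets borel \<and>
     (\<forall>K. compact K \<longrightarrow> emeasure \<mu> K < \<infinity>) \<and>
     (\<forall>U. open U \<and> U \<noteq> {} \<longrightarrow> emeasure \<mu> U > 0) \<and>
     (\<forall>g. \<forall>A\<in>sets borel. emeasure \<mu> ((\<lambda>x. g + x) ` A) = emeasure \<mu> A)"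

definition folner_sequence :: "'g::topological_ab_group_add measure \<Rightarrow> (nat \<Rightarrow> 'g set) \<Rightarrow> bool" where
  "folner_sequence \<mu> \<Lambda> \<longleftrightarrow>
     (\<forall>n. compact (\<Lambda> n) \<and> emeasure \<mu> (\<Lambda> n) > 0) \<and>
     (\<forall>g. (\<lambda>n. measure \<mu> ((\<Lambda> n - (\<lambda>x. x + g) ` \<Lambda> n) \<union> ((\<lambda>x. x + g) ` \<Lambda> n - \<Lambda> n))
                 / measure \<mu> (\<Lambda> n)) \<longlonglongrightarrow> 0)"

definition favg :: "'g measure \<Rightarrow> 'g set \<Rightarrow> ('g \<Rightarrow> 'b::{banach, second_countable_topology}) \<Rightarrow> 'b" where
  "favg \<mu> L f = (1 / measure \<mu> L) *\<^sub>R (LINT g:L|\<mu>. f g)"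

definition complex_scalar :: "(complex \<Rightarrow> 'v::real_normed_vector \<Rightarrow> 'v) \<Rightarrow> bool" where
  "complex_scalar sc \<longleftrightarrow>
     (\<forall>c x y. sc c (x + y) = sc c x + sc c y) \<and>
     (\<forall>c d x. sc (c + d) x = sc c x + sc d x) \<and>
     (\<forall>c d x. sc (c * d) x = sc c (sc d x)) \<and>
     (\<forall>r x. sc (complex_of_real r) x = r *\<^sub>R x) \<and>
     (\<forall>c x. norm (sc c x) = cmod c * norm x)"

definition cstar_algebra :: "(complex \<Rightarrow> 'a::{real_normed_algebra_1, banach} \<Rightarrow> 'a) \<Rightarrow> ('a \<Rightarrow> 'a) \<Rightarrow> bool" where
  "cstar_algebra sc star \<longleftrightarrow>
     complex_scalar sc \<and>
     (\<forall>c a b. sc c (a * b) = sc c a * b \<and> sc c (a * b) = a * sc c b) \<and>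
     (\<forall>a b. star (a + b) = star a + star b) \<and>
     (\<forall>c a. star (sc c a) = sc (cnj c) (star a)) \<and>
     (\<forall>a b. star (a * b) = star b * star a) \<and>
     (\<forall>a. star (star a) = a) \<and>
     (\<forall>a. norm (star a * a) = norm a ^ 2)"

definition is_state :: "(complex \<Rightarrow> 'a::{real_normed_algebra_1, banach} \<Rightarrow> 'a) \<Rightarrow> ('a \<Rightarrow> 'a) \<Rightarrow> ('a \<Rightarrow> complex) \<Rightarrow> bool" where
  "is_state sc star \<omega> \<longleftrightarrow>
     (\<forall>a b. \<omega> (a + b) = \<omega> a + \<omega> b) \<and>
     (\<forall>c a. \<omega> (sc c a) = c * \<omega> a) \<and>
     (\<forall>a. Im (\<omega> (star a * a)) = 0 \<and> Re (\<omega> (star a * a)) \<ge> 0) \<and>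
     \<omega> 1 = 1"

definition star_automorphism :: "(complex \<Rightarrow> 'a::{real_normed_algebra_1, banach} \<Rightarrow> 'a) \<Rightarrow> ('a \<Rightarrow> 'a) \<Rightarrow> ('a \<Rightarrow> 'a) \<Rightarrow> bool" where
  "star_automorphism sc star T \<longleftrightarrow>
     bij T \<and>
     (\<forall>a b. T (a + b) = T a + T b) \<and>
     (\<forall>c a. T (sc c a) = sc c (T a)) \<and>
     (\<forall>a b. T (a * b) = T a * T b) \<and>
     (\<forall>a. T (star a) = star (T a))"

definition cstar_dynamical_system ::
  "(complex \<Rightarrow> 'a::{real_normed_algebra_1, banach} \<Rightarrow> 'a) \<Rightarrow> ('a \<Rightarrow> 'a) \<Rightarrow> ('a \<Rightarrow> complex)
   \<Rightarrow> ('g::{topological_ab_group_add} \<Rightarrow> 'a \<Rightarrow> 'a) \<Rightarrow> bool" where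
  "cstar_dynamical_system sc star \<omega> \<tau> \<longleftrightarrow>
     cstar_algebra sc star \<and> is_state sc star \<omega> \<and>
     (\<forall>g. star_automorphism sc star (\<tau> g)) \<and>
     (\<forall>g h. \<tau> g \<circ> \<tau> h = \<tau> (g + h)) \<and> \<tau> 0 = id \<and>
     (\<forall>a b. (\<lambda>g. \<omega> (a * \<tau> g b)) \<in> borel_measurable borel) \<and>
     (\<forall>g a. \<omega> (\<tau> g a) = \<omega> a)"

definition group_hom :: "('g::ab_group_add \<Rightarrow> 'g) \<Rightarrow> bool" where
  "group_hom \<phi> \<longleftrightarrow> (\<forall>g h. \<phi> (g + h) = \<phi> g + \<phi> h)"

definition asymptotically_abelian ::
  "('g::topological_ab_group_add \<Rightarrow> 'g) set \<Rightarrow> 'g measure \<Rightarrow> (nat \<Rightarrow> 'g set)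
   \<Rightarrow> ('g \<Rightarrow> 'a::{real_normed_algebra_1, banach} \<Rightarrow> 'a) \<Rightarrow> bool" where
  "asymptotically_abelian M \<mu> \<Lambda> \<tau> \<longleftrightarrow>
     (\<forall>\<phi>\<in>M. \<forall>a b.
        continuous_on UNIV (\<lambda>g. \<tau> (\<phi> g) b) \<and>
        (\<lambda>n. favg \<mu> (\<Lambda> n) (\<lambda>g. norm (a * \<tau> (\<phi> g) b - \<tau> (\<phi> g) b * a))) \<longlonglongrightarrow> 0)"

text \<open>Translational: in additive notation, phi2(g)^{-1} phi1(g) is phi1 g - phi2 g.\<close>
definition translational :: "('g::ab_group_add \<Rightarrow> 'g) set \<Rightarrow> bool" where
  "translational M \<longleftrightarrow> (\<forall>\<phi>1\<in>M. \<forall>\<phi>2\<in>M. \<phi>1 \<noteq> \<phi>2 \<longrightarrow> (\<lambda>g. \<phi>1 g - \<phi>2 g) \<in> M)"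

definition hilbert_space :: "(complex \<Rightarrow> 'h::{real_normed_vector, banach} \<Rightarrow> 'h) \<Rightarrow> ('h \<Rightarrow> 'h \<Rightarrow> complex) \<Rightarrow> bool" where
  "hilbert_space scH ip \<longleftrightarrow>
     complex_scalar scH \<and>
     (\<forall>x y z. ip x (y + z) = ip x y + ip x z) \<and>
     (\<forall>x c y. ip x (scH c y) = c * ip x y) \<and>
     (\<forall>x y. ip y x = cnj (ip x y)) \<and>
     (\<forall>x. ip x x = complex_of_real ((norm x)\<^sup>2))"

definition gns_representation ::
  "(complex \<Rightarrow> 'a::{real_normed_algebra_1, banach} \<Rightarrow> 'a) \<Rightarrow> ('a \<Rightarrow> 'a) \<Rightarrow> ('a \<Rightarrow> complex)
   \<Rightarrow> (complex \<Rightarrow> 'h::{real_normed_vector, banach} \<Rightarrow> 'h) \<Rightarrow> ('h \<Rightarrow> 'h \<Rightarrow> complex) \<Rightarrow> ('a \<Rightarrow> 'h) \<Rightarrow> bool" where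
  "gns_representation sc star \<omega> scH ip \<iota> \<longleftrightarrow>
     hilbert_space scH ip \<and>
     (\<forall>a b. \<iota> (a + b) = \<iota> a + \<iota> b) \<and>
     (\<forall>c a. \<iota> (sc c a) = scH c (\<iota> a)) \<and>
     closure (range \<iota>) = UNIV \<and>
     (\<forall>a b. ip (\<iota> a) (\<iota> b) = \<omega> (star a * b))"

end

theory Submission
  imports Defs
begin

text \<open>Write \<open>X g = \<Prod>\<^sub>j \<tau>(\<phi>\<^sub>j g) a\<^sub>j\<close> and \<open>c\<^sub>j = \<tau>(\<phi>\<^sub>j h) a\<^sub>j\<close>.  As the \<open>\<phi>\<^sub>j\<close> are homomorphisms,
  \<open>u\<^sub>g\<^sub>h\<close> is built from \<open>C g = \<Prod>\<^sub>j \<tau>(\<phi>\<^sub>j g) c\<^sub>j\<close>, and expanding the inner product leaves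
  \<open>\<omega>(X g\<^sup>* C g)\<close>, \<open>\<omega>(X g)\<close>, \<open>\<omega>(C g)\<close> and constants.  After translating by \<open>-\<phi>\<^sub>1 g\<close> (this is where
  translationality of \<open>M\<close> enters) the mixing hypothesis gives the mean limit \<open>\<kappa>\<close> for \<open>\<omega>(X g)\<close>
  and \<open>\<omega>(C g)\<close>.  In \<open>X g\<^sup>* C g\<close> each factor \<open>\<tau>(\<phi>\<^sub>j g) a\<^sub>j\<^sup>*\<close> is moved to the right until it meets
  \<open>\<tau>(\<phi>\<^sub>j g) c\<^sub>j\<close>; each transposition costs a commutator \<open>[\<tau>(\<phi>\<^sub>j g - \<phi>\<^sub>i g) p, q]\<close> with
  \<open>\<phi>\<^sub>j - \<phi>\<^sub>i \<in> M\<close>, whose mean vanishes by asymptotic abelianness.  The errors are measured in the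
  GNS seminorm \<open>\<parallel>\<iota> x\<parallel>\<close>, which is \<open>\<tau>\<close>-invariant and satisfies \<open>\<parallel>\<iota>(b Q)\<parallel> \<le> \<parallel>b\<parallel> \<parallel>\<iota> Q\<parallel>\<close>, so
  \<open>\<omega>(X g\<^sup>* C g)\<close> has the same mean limit as \<open>\<omega>(\<Prod>\<^sub>j \<tau>(\<phi>\<^sub>j g)(a\<^sub>j\<^sup>* c\<^sub>j))\<close>, namely
  \<open>\<Prod>\<^sub>j \<omega>(a\<^sub>j\<^sup>* c\<^sub>j)\<close> by mixing again.\<close>

lemma abs_half_gchoose_le_1: "\<bar>(1/2::real) gchoose n\<bar> \<le> 1"
proof (induction n)
  case 0 then show ?case by simp
next
  case (Suc n)
  have rec: "of_nat (Suc n) * ((1/2::real) gchoose Suc n) = (1/2 - of_nat n) * ((1/2) gchoose n)"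
    using gbinomial_absorption[of n "1/2::real"] gbinomial_absorb_comp[of "1/2::real" n] by simp
  have "\<bar>1/2 - real n\<bar> \<le> real (Suc n)" by simp
  hence "\<bar>(1/2 - of_nat n) * ((1/2::real) gchoose n)\<bar> \<le> real (Suc n)"
    using Suc.IH by (simp add: abs_mult mult_mono' order_trans[OF mult_left_mono])
  hence "real (Suc n) * \<bar>(1/2::real) gchoose Suc n\<bar> \<le> real (Suc n) * 1"
    using rec by (metis abs_mult abs_of_nat mult.right_neutral of_nat_Suc)
  thus ?case by (simp del: of_nat_Suc)
qed

lemma one_gchoose_eq_0: "n \<ge> 2 \<Longrightarrow> (1::real) gchoose n = 0"
proof -
  assume "n \<ge> 2"
  then obtain m where m: "n = Suc (Suc m)" by (metis add_2_eq_Suc le_Suc_ex)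
  show ?thesis unfolding m gbinomial_Suc by (simp add: prod.atLeast0_atMost_Suc_shift) linarith
qed

text \<open>The square root is the binomial series \<open>\<Sum>\<^sub>n (1/2 choose n) (-y)\<^sup>n\<close>; squaring it by the
  Cauchy product and Vandermonde's identity leaves only the terms \<open>1 - y\<close>.\<close>
lemma selfadjoint_sqrt_one_minus:
  fixes y :: "'a::{real_normed_algebra_1,banach}"
  assumes ny: "norm y < 1"
    and star_add: "\<And>a b. star (a + b) = star a + star b"
    and star_scaleR: "\<And>r a. star (r *\<^sub>R a) = r *\<^sub>R star a"
    and star_norm: "\<And>a. norm (star a) = norm a"
    and star_mult: "\<And>a b. star (a * b) = star b * star a"
    and star_1: "star 1 = 1" and star_y: "star y = y"
  shows "\<exists>s. star s = s \<and> s * s = 1 - y"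
proof -
  define c where "c n = ((1/2::real) gchoose n) * (-1)^n" for n
  define f where "f n = c n *\<^sub>R y ^ n" for n
  have "norm (f n) \<le> norm y ^ n" for n
  proof -
    have "norm (f n) = \<bar>c n\<bar> * norm (y ^ n)" by (simp add: f_def)
    also have "\<dots> \<le> 1 * norm y ^ n"
      using abs_half_gchoose_le_1[of n] by (intro mult_mono norm_power_ineq) (auto simp: c_def abs_mult)
    finally show ?thesis by simp
  qed
  hence summable_norm: "summable (\<lambda>n. norm (f n))"
    by (intro summable_comparison_test[OF _ summable_geometric[of "norm y"]]) (use ny in auto)
  have "bounded_linear star"
    by (rule bounded_linear_intro[of _ 1]) (auto simp: star_add star_scaleR star_norm)
  hence "star (suminf f) = (\<Sum>n. star (f n))"
    using bounded_linear.suminf summable_norm_cancel[OF summable_norm] by blast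
  also have "\<dots> = suminf f"
  proof -
    have "star (y ^ n) = y ^ n" for n
      by (induction n) (auto simp: star_1 star_mult star_y power_commutes)
    thus ?thesis by (simp add: f_def[abs_def] star_scaleR)
  qed
  finally have selfadjoint: "star (suminf f) = suminf f" .
  have cauchy_product: "(\<lambda>k. \<Sum>i\<le>k. f i * f (k - i)) sums (suminf f * suminf f)"
    by (rule Cauchy_product_sums[OF summable_norm summable_norm])
  have coeff: "(\<Sum>i\<le>k. f i * f (k - i)) = ((-1)^k * ((1::real) gchoose k)) *\<^sub>R y ^ k" for k
  proof -
    have "(\<Sum>i\<le>k. f i * f (k - i)) = (\<Sum>i\<le>k. c i * c (k - i)) *\<^sub>R y ^ k"
      by (auto simp: f_def power_add[symmetric] scaleR_sum_left intro!: sum.cong)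
    also have "(\<Sum>i\<le>k. c i * c (k - i)) = (-1)^k * (\<Sum>i\<le>k. ((1/2::real) gchoose i) * ((1/2) gchoose (k - i)))"
      unfolding sum_distrib_left by (intro sum.cong refl) (auto simp: c_def power_add[symmetric])
    also have "(\<Sum>i\<le>k. ((1/2::real) gchoose i) * ((1/2) gchoose (k - i))) = 1 gchoose k"
      using gbinomial_Vandermonde[of "1/2::real" "1/2" k] by (simp add: atMost_atLeast0)
    finally show ?thesis .
  qed
  have "(\<lambda>k. ((-1)^k * ((1::real) gchoose k)) *\<^sub>R y ^ k) sums (\<Sum>k\<in>{0,1}. ((-1)^k * ((1::real) gchoose k)) *\<^sub>R y ^ k)"
    by (rule sums_finite) (auto simp: one_gchoose_eq_0)
  hence "(\<lambda>k. \<Sum>i\<le>k. f i * f (k - i)) sums (1 - y)" unfolding coeff by simp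
  with cauchy_product have "suminf f * suminf f = 1 - y" using sums_unique2 by blast
  with selfadjoint show ?thesis by blast
qed

locale gns_system =
  fixes sc :: "complex \<Rightarrow> 'a::{real_normed_algebra_1,banach} \<Rightarrow> 'a"
    and star :: "'a \<Rightarrow> 'a" and \<omega> :: "'a \<Rightarrow> complex"
    and \<tau> :: "'g::topological_ab_group_add \<Rightarrow> 'a \<Rightarrow> 'a"
    and scH :: "complex \<Rightarrow> 'h::{real_normed_vector,banach} \<Rightarrow> 'h"
    and ip :: "'h \<Rightarrow> 'h \<Rightarrow> complex" and \<iota> :: "'a \<Rightarrow> 'h"
  assumes dynamical_system: "cstar_dynamical_system sc star \<omega> \<tau>"
    and gns: "gns_representation sc star \<omega> scH ip \<iota>"
begin

lemma sc_real: "sc (complex_of_real r) x = r *\<^sub>R x"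
  and star_add: "star (a + b) = star a + star b"
  and star_sc: "star (sc c a) = sc (cnj c) (star a)"
  and star_mult: "star (a * b) = star b * star a"
  and star_star[simp]: "star (star a) = a"
  and cstar_identity: "norm (star a * a) = norm a ^ 2"
  using dynamical_system
  by (auto simp: cstar_dynamical_system_def cstar_algebra_def complex_scalar_def)

lemma star_scaleR: "star (r *\<^sub>R a) = r *\<^sub>R star a"
  using star_sc[of "complex_of_real r" a] by (simp add: sc_real)

lemma star_1[simp]: "star 1 = 1"
  using star_mult[of "star 1" 1] by simp

lemma norm_star: "norm (star a) = norm a"
proof -
  have le: "norm b \<le> norm (star b)" for b
  proof (cases "b = 0")
    case False
    have "norm b ^ 2 \<le> norm (star b) * norm b"
      using cstar_identity[of b] norm_mult_ineq[of "star b" b] by simp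
    then show ?thesis using False by (simp add: power2_eq_square)
  qed simp
  show ?thesis using le[of a] le[of "star a"] by simp
qed

lemma state_add: "\<omega> (a + b) = \<omega> a + \<omega> b"
  and state_sc: "\<omega> (sc c a) = c * \<omega> a"
  and state_positive: "Re (\<omega> (star a * a)) \<ge> 0"
  and state_1[simp]: "\<omega> 1 = 1"
  and state_tau[simp]: "\<omega> (\<tau> g a) = \<omega> a"
  using dynamical_system by (auto simp: cstar_dynamical_system_def is_state_def)

lemma state_diff: "\<omega> (a - b) = \<omega> a - \<omega> b"
  using state_add[of "a - b" b] by simp

lemma state_scaleR: "\<omega> (r *\<^sub>R a) = complex_of_real r * \<omega> a"
  using state_sc[of "complex_of_real r" a] by (simp add: sc_real)

lemma tau_tau: "\<tau> g (\<tau> h x) = \<tau> (g + h) x"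
  and tau_0[simp]: "\<tau> 0 x = x"
  using dynamical_system unfolding cstar_dynamical_system_def by (metis comp_apply id_apply)+

lemma tau_add: "\<tau> g (a + b) = \<tau> g a + \<tau> g b"
  and tau_mult: "\<tau> g (a * b) = \<tau> g a * \<tau> g b"
  and tau_star: "\<tau> g (star a) = star (\<tau> g a)"
  using dynamical_system by (auto simp: cstar_dynamical_system_def star_automorphism_def)

lemma tau_uminus_tau[simp]: "\<tau> (- g) (\<tau> g x) = x"
  by (simp add: tau_tau)

lemma tau_diff: "\<tau> g (a - b) = \<tau> g a - \<tau> g b"
  using tau_add[of g "a - b" b] by simp

lemma tau_1[simp]: "\<tau> g 1 = 1"
proof -
  have "\<tau> g 1 = \<tau> g 1 * \<tau> g (\<tau> (- g) 1)" by (simp add: tau_tau)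
  also have "\<dots> = \<tau> g (1 * \<tau> (- g) 1)" by (simp only: tau_mult)
  also have "\<dots> = 1" by (simp add: tau_tau)
  finally show ?thesis .
qed

lemma tau_prod_list: "\<tau> g (prod_list xs) = prod_list (map (\<tau> g) xs)"
  by (induction xs) (simp_all add: tau_mult)

lemma ip_add_right: "ip x (y + z) = ip x y + ip x z"
  and ip_sc_right: "ip x (scH c y) = c * ip x y"
  and ip_commute: "ip y x = cnj (ip x y)"
  and ip_self: "ip x x = complex_of_real ((norm x)\<^sup>2)"
  and norm_scH: "norm (scH c x) = cmod c * norm x"
  and scH_real: "scH (complex_of_real r) x = r *\<^sub>R x"
  using gns unfolding gns_representation_def hilbert_space_def complex_scalar_def by blast+

lemma ip_add_left: "ip (x + y) z = ip x z + ip y z"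
  by (metis complex_cnj_add ip_add_right ip_commute)

lemma ip_sc_left: "ip (scH c x) y = cnj c * ip x y"
  by (metis complex_cnj_mult ip_commute ip_sc_right)

lemma ip_diff_right: "ip x (y - z) = ip x y - ip x z"
  using ip_add_right[of x "y - z" z] by simp

lemma ip_diff_left: "ip (x - y) z = ip x z - ip y z"
  using ip_add_left[of "x - y" y z] by simp

lemma Re_ip_le: "Re (ip x y) \<le> norm x * norm y"
proof -
  have "ip (x + y) (x + y) = ip x x + ip x y + ip y x + ip y y"
    by (simp add: ip_add_left ip_add_right)
  hence "(norm (x + y))\<^sup>2 = (norm x)\<^sup>2 + 2 * Re (ip x y) + (norm y)\<^sup>2"
    using ip_self[of x] ip_self[of y] ip_self[of "x + y"] ip_commute[of x y]
    by (simp add: complex_eq_iff)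
  moreover have "(norm (x + y))\<^sup>2 \<le> (norm x + norm y)\<^sup>2"
    by (simp add: norm_triangle_ineq power_mono)
  ultimately show ?thesis by (simp add: power2_sum)
qed

lemma cauchy_schwarz: "cmod (ip x y) \<le> norm x * norm y"
proof -
  define t where "t = cnj (sgn (ip x y))"
  have "ip x (scH t y) = complex_of_real (cmod (ip x y))"
    using complex_norm_square[of "ip x y"]
    by (cases "ip x y = 0") (auto simp: ip_sc_right t_def sgn_div_norm scaleR_conv_of_real
        field_simps power2_eq_square)
  hence "cmod (ip x y) = Re (ip x (scH t y))" by simp
  also have "\<dots> \<le> norm x * norm (scH t y)" by (rule Re_ip_le)
  also have "\<dots> \<le> norm x * norm y"
    by (auto simp: norm_scH t_def norm_sgn intro!: mult_left_mono mult_left_le_one_le)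
  finally show ?thesis .
qed

lemma gns_add: "\<iota> (a + b) = \<iota> a + \<iota> b"
  and gns_sc: "\<iota> (sc c a) = scH c (\<iota> a)"
  and ip_gns: "ip (\<iota> a) (\<iota> b) = \<omega> (star a * b)"
  using gns by (auto simp: gns_representation_def)

lemma gns_diff: "\<iota> (a - b) = \<iota> a - \<iota> b"
  using gns_add[of "a - b" b] by simp

lemma gns_0[simp]: "\<iota> 0 = 0"
  using gns_diff[of 0 0] by simp

lemma norm_gns_squared: "(norm (\<iota> a))\<^sup>2 = Re (\<omega> (star a * a))"
  using ip_self[of "\<iota> a"] ip_gns[of a a] by (metis Re_complex_of_real)

lemma norm_gns_1[simp]: "norm (\<iota> 1) = 1"
  using norm_gns_squared[of 1] norm_ge_zero[of "\<iota> 1"] by (simp add: power2_eq_1_iff)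

lemma state_star: "\<omega> (star a) = cnj (\<omega> a)"
  using ip_gns[of a 1] ip_gns[of 1 a] ip_commute[of "\<iota> 1" "\<iota> a"] by (metis complex_cnj_cnj mult_1 mult_1_right star_1)

lemma ip_gns_sub_vacuum:
  "ip (\<iota> x - scH \<kappa> (\<iota> 1)) (\<iota> y - scH \<kappa> (\<iota> 1))
     = \<omega> (star x * y) - \<kappa> * cnj (\<omega> x) - cnj \<kappa> * \<omega> y + cnj \<kappa> * \<kappa>"
  by (simp add: ip_diff_left ip_diff_right ip_sc_left ip_sc_right ip_gns state_star algebra_simps)

text \<open>For \<open>c > \<parallel>b\<parallel>\<^sup>2\<close> the element \<open>c - b\<^sup>*b\<close> is a square \<open>t\<^sup>*t\<close>, so \<open>\<omega>((tQ)\<^sup>*(tQ)) \<ge> 0\<close> gives the bound.\<close>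
lemma norm_gns_mult_squared_le:
  assumes c: "c > (norm b)\<^sup>2"
  shows "(norm (\<iota> (b * Q)))\<^sup>2 \<le> c * (norm (\<iota> Q))\<^sup>2"
proof -
  have c0: "c > 0" using c by (smt (verit) zero_le_power2)
  define y where "y = (1/c) *\<^sub>R (star b * b)"
  have "norm y < 1" using c c0 by (simp add: y_def cstar_identity)
  moreover have "star y = y" by (simp add: y_def star_scaleR star_mult)
  ultimately obtain s where s: "star s = s" "s * s = 1 - y"
    using selfadjoint_sqrt_one_minus[of y star] star_add star_scaleR norm_star star_mult star_1
    by blast
  define t where "t = sqrt c *\<^sub>R s"
  have "star t * t = c *\<^sub>R 1 - star b * b"
    using c0 s by (simp add: t_def star_scaleR y_def scaleR_diff_right)
  hence "star (t * Q) * (t * Q) = star Q * (c *\<^sub>R 1 - star b * b) * Q"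
    by (metis star_mult mult.assoc)
  also have "\<dots> = c *\<^sub>R (star Q * Q) - star (b * Q) * (b * Q)"
    by (simp add: star_mult algebra_simps)
  finally have "star (t * Q) * (t * Q) = c *\<^sub>R (star Q * Q) - star (b * Q) * (b * Q)" .
  moreover have "0 \<le> Re (\<omega> (star (t * Q) * (t * Q)))" by (rule state_positive)
  ultimately show ?thesis by (simp add: state_diff state_scaleR norm_gns_squared)
qed

lemma norm_gns_mult_le: "norm (\<iota> (b * Q)) \<le> norm b * norm (\<iota> Q)"
proof -
  define N where "N = (norm (\<iota> Q))\<^sup>2"
  have N0: "N \<ge> 0" by (simp add: N_def)
  have "(norm (\<iota> (b * Q)))\<^sup>2 \<le> (norm b)\<^sup>2 * N"
  proof (rule field_le_epsilon)
    fix e :: real assume e: "e > 0"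
    have "(norm (\<iota> (b * Q)))\<^sup>2 \<le> ((norm b)\<^sup>2 + e / (N + 1)) * N"
      using norm_gns_mult_squared_le[of b "(norm b)\<^sup>2 + e / (N + 1)" Q] e N0
      unfolding N_def by (simp add: add_pos_nonneg)
    also have "\<dots> = (norm b)\<^sup>2 * N + e * (N / (N + 1))" using N0 by (simp add: field_simps)
    also have "e * (N / (N + 1)) \<le> e * 1" using e N0 by (intro mult_left_mono) auto
    finally show "(norm (\<iota> (b * Q)))\<^sup>2 \<le> (norm b)\<^sup>2 * N + e" by simp
  qed
  hence "(norm (\<iota> (b * Q)))\<^sup>2 \<le> (norm b * norm (\<iota> Q))\<^sup>2" by (simp add: N_def power_mult_distrib)
  thus ?thesis by (rule power2_le_imp_le) simp
qed

lemma norm_gns_tau: "norm (\<iota> (\<tau> g x)) = norm (\<iota> x)"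
proof -
  have "(norm (\<iota> (\<tau> g x)))\<^sup>2 = (norm (\<iota> x))\<^sup>2"
    by (simp add: norm_gns_squared tau_star[symmetric] tau_mult[symmetric])
  thus ?thesis by (simp add: power2_eq_iff_nonneg)
qed

lemma norm_gns_tau_mult_le: "norm (\<iota> (\<tau> g x * Q)) \<le> norm x * norm (\<iota> Q)"
proof -
  have "norm (\<iota> (\<tau> g x * Q)) = norm (\<iota> (x * \<tau> (-g) Q))"
    by (metis norm_gns_tau tau_mult tau_uminus_tau)
  also have "\<dots> \<le> norm x * norm (\<iota> (\<tau> (-g) Q))" by (rule norm_gns_mult_le)
  finally show ?thesis by (simp add: norm_gns_tau)
qed

lemma norm_state_le_gns: "cmod (\<omega> x) \<le> norm (\<iota> x)"
  using cauchy_schwarz[of "\<iota> 1" "\<iota> x"] by (simp add: ip_gns)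

lemma bounded_linear_gns: "bounded_linear \<iota>"
proof (rule bounded_linear_intro[of _ 1])
  show "\<iota> (r *\<^sub>R x) = r *\<^sub>R \<iota> x" for r x
    using gns_sc[of "complex_of_real r" x] by (simp add: sc_real scH_real)
  show "norm (\<iota> x) \<le> norm x * 1" for x using norm_gns_mult_le[of x 1] by simp
qed (rule gns_add)

lemma bounded_linear_state: "bounded_linear \<omega>"
proof (rule bounded_linear_intro[of _ 1])
  show "\<omega> (r *\<^sub>R x) = r *\<^sub>R \<omega> x" for r x by (metis state_scaleR scaleR_conv_of_real)
  show "norm (\<omega> x) \<le> norm x * 1" for x
    using norm_state_le_gns[of x] norm_gns_mult_le[of x 1] by simp
qed (rule state_add)

end

locale compact_means =
  fixes \<mu> :: "'g::{t2_space, second_countable_topology} measure"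
    and \<Lambda> :: "nat \<Rightarrow> 'g set"
  assumes sets_eq_borel: "sets \<mu> = sets borel"
    and compact_window: "compact (\<Lambda> n)"
    and window_finite: "emeasure \<mu> (\<Lambda> n) < \<infinity>"
    and window_positive: "emeasure \<mu> (\<Lambda> n) > 0"
begin

lemma window_measure_pos: "measure \<mu> (\<Lambda> n) > 0"
  using window_positive[of n] window_finite[of n] by (simp add: measure_def enn2real_positive_iff)

lemma window_sets: "\<Lambda> n \<in> sets \<mu>"
  using compact_window[of n] sets_eq_borel by (simp add: compact_imp_closed borel_closed)

lemma set_integrable_continuous:
  fixes f :: "'g \<Rightarrow> 'b::{banach, second_countable_topology}"
  assumes "continuous_on UNIV f"
  shows "set_integrable \<mu> (\<Lambda> n) f"
proof -
  have "compact (f ` \<Lambda> n)"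
    using assms compact_window[of n] by (meson compact_continuous_image continuous_on_subset subset_UNIV)
  then obtain B where B: "\<And>x. x \<in> \<Lambda> n \<Longrightarrow> norm (f x) \<le> B"
    using compact_imp_bounded bounded_iff by (metis imageI)
  have "f \<in> borel_measurable \<mu>"
    using assms borel_measurable_continuous_onI measurable_cong_sets[OF sets_eq_borel refl] by blast
  from integrableI_bounded_set_indicator[OF window_sets this window_finite, where B=B] B
  show ?thesis unfolding set_integrable_def by auto
qed

lemma favg_add:
  fixes f h :: "'g \<Rightarrow> 'b::{banach, second_countable_topology}"
  shows "continuous_on UNIV f \<Longrightarrow> continuous_on UNIV h \<Longrightarrow>
    favg \<mu> (\<Lambda> n) (\<lambda>g. f g + h g) = favg \<mu> (\<Lambda> n) f + favg \<mu> (\<Lambda> n) h"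
  unfolding favg_def
  by (simp add: set_integral_add(2)[OF set_integrable_continuous set_integrable_continuous] scaleR_add_right)

lemma favg_diff:
  fixes f h :: "'g \<Rightarrow> 'b::{banach, second_countable_topology}"
  shows "continuous_on UNIV f \<Longrightarrow> continuous_on UNIV h \<Longrightarrow>
    favg \<mu> (\<Lambda> n) (\<lambda>g. f g - h g) = favg \<mu> (\<Lambda> n) f - favg \<mu> (\<Lambda> n) h"
  unfolding favg_def
  by (simp add: set_integral_diff(2)[OF set_integrable_continuous set_integrable_continuous] scaleR_diff_right)

lemma favg_mult_left:
  fixes f :: "'g \<Rightarrow> 'b::{real_normed_field, banach, second_countable_topology}"
  shows "favg \<mu> (\<Lambda> n) (\<lambda>g. c * f g) = c * favg \<mu> (\<Lambda> n) f"
  unfolding favg_def by simp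

lemma favg_const: "favg \<mu> (\<Lambda> n) (\<lambda>g. c) = (c :: 'b::{banach, second_countable_topology})"
  using set_integral_const[OF window_sets, of n c] window_finite[of n] window_measure_pos[of n]
  by (simp add: favg_def)

lemma favg_cnj: "favg \<mu> (\<Lambda> n) (\<lambda>g. cnj (f g)) = cnj (favg \<mu> (\<Lambda> n) f)"
proof -
  have "(\<lambda>x. indicator (\<Lambda> n) x *\<^sub>R cnj (f x)) = (\<lambda>x. cnj (indicator (\<Lambda> n) x *\<^sub>R f x))"
    by (auto simp: fun_eq_iff complex_cnj_scaleR)
  hence "(LINT g:\<Lambda> n|\<mu>. cnj (f g)) = cnj (LINT g:\<Lambda> n|\<mu>. f g)"
    unfolding set_lebesgue_integral_def by (simp only: Bochner_Integration.integral_cnj)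
  thus ?thesis unfolding favg_def by (simp add: complex_cnj_scaleR)
qed

lemma favg_mono:
  fixes f h :: "'g \<Rightarrow> real"
  shows "continuous_on UNIV f \<Longrightarrow> continuous_on UNIV h \<Longrightarrow> (\<And>g. f g \<le> h g) \<Longrightarrow>
    favg \<mu> (\<Lambda> n) f \<le> favg \<mu> (\<Lambda> n) h"
  unfolding favg_def real_scaleR_def using window_measure_pos[of n]
  by (intro mult_left_mono set_integral_mono set_integrable_continuous) auto

lemma norm_favg_le:
  fixes f :: "'g \<Rightarrow> 'b::{banach, second_countable_topology}"
  shows "norm (favg \<mu> (\<Lambda> n) f) \<le> favg \<mu> (\<Lambda> n) (\<lambda>g. norm (f g))"
proof -
  have "norm (LINT g:\<Lambda> n|\<mu>. f g) \<le> (LINT g:\<Lambda> n|\<mu>. norm (f g))"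
    unfolding set_lebesgue_integral_def
    using integral_norm_bound[of \<mu> "\<lambda>g. indicator (\<Lambda> n) g *\<^sub>R f g"] by (simp add: abs_mult)
  thus ?thesis unfolding favg_def using window_measure_pos[of n] by (simp add: divide_right_mono)
qed

lemma tendsto_favg_add:
  fixes f h :: "'g \<Rightarrow> 'b::{banach, second_countable_topology}"
  assumes "continuous_on UNIV f" "continuous_on UNIV h"
    and "(\<lambda>n. favg \<mu> (\<Lambda> n) f) \<longlonglongrightarrow> F" "(\<lambda>n. favg \<mu> (\<Lambda> n) h) \<longlonglongrightarrow> H"
  shows "(\<lambda>n. favg \<mu> (\<Lambda> n) (\<lambda>g. f g + h g)) \<longlonglongrightarrow> F + H"
  using tendsto_add[OF assms(3,4)] by (simp add: favg_add assms(1,2))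

lemma tendsto_favg_diff:
  fixes f h :: "'g \<Rightarrow> 'b::{banach, second_countable_topology}"
  assumes "continuous_on UNIV f" "continuous_on UNIV h"
    and "(\<lambda>n. favg \<mu> (\<Lambda> n) f) \<longlonglongrightarrow> F" "(\<lambda>n. favg \<mu> (\<Lambda> n) h) \<longlonglongrightarrow> H"
  shows "(\<lambda>n. favg \<mu> (\<Lambda> n) (\<lambda>g. f g - h g)) \<longlonglongrightarrow> F - H"
  using tendsto_diff[OF assms(3,4)] by (simp add: favg_diff assms(1,2))

lemma tendsto_favg_mult_left:
  fixes f :: "'g \<Rightarrow> 'b::{real_normed_field, banach, second_countable_topology}"
  shows "(\<lambda>n. favg \<mu> (\<Lambda> n) f) \<longlonglongrightarrow> F \<Longrightarrow> (\<lambda>n. favg \<mu> (\<Lambda> n) (\<lambda>g. c * f g)) \<longlonglongrightarrow> c * F"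
  by (simp add: favg_mult_left tendsto_mult_left)

lemma tendsto_favg_cnj:
  "(\<lambda>n. favg \<mu> (\<Lambda> n) f) \<longlonglongrightarrow> F \<Longrightarrow> (\<lambda>n. favg \<mu> (\<Lambda> n) (\<lambda>g. cnj (f g))) \<longlonglongrightarrow> cnj F"
  by (simp add: favg_cnj tendsto_cnj)

lemma tendsto_favg_const: "(\<lambda>n. favg \<mu> (\<Lambda> n) (\<lambda>g. c)) \<longlonglongrightarrow> c"
  by (simp add: favg_const)

definition vanishing_mean :: "('g \<Rightarrow> real) \<Rightarrow> bool" where
  "vanishing_mean f \<longleftrightarrow>
     continuous_on UNIV f \<and> (\<forall>g. 0 \<le> f g) \<and> (\<lambda>n. favg \<mu> (\<Lambda> n) f) \<longlonglongrightarrow> 0"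

lemma vanishing_mean_zero: "vanishing_mean (\<lambda>g. 0)"
  unfolding vanishing_mean_def by (simp add: favg_const)

lemma vanishing_mean_add: "vanishing_mean f \<Longrightarrow> vanishing_mean h \<Longrightarrow> vanishing_mean (\<lambda>g. f g + h g)"
  unfolding vanishing_mean_def by (auto simp: favg_add intro!: continuous_on_add tendsto_add_zero)

lemma vanishing_mean_mult_left: "vanishing_mean f \<Longrightarrow> c \<ge> 0 \<Longrightarrow> vanishing_mean (\<lambda>g. c * f g)"
  unfolding vanishing_mean_def
  by (auto simp: favg_mult_left intro!: continuous_on_mult tendsto_mult_right_zero)

lemma vanishing_mean_le:
  assumes "continuous_on UNIV f" "\<And>g. 0 \<le> f g" "\<And>g. f g \<le> h g" "vanishing_mean h"
  shows "vanishing_mean f"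
  unfolding vanishing_mean_def
proof (intro conjI allI assms)
  have h: "continuous_on UNIV h" "(\<lambda>n. favg \<mu> (\<Lambda> n) h) \<longlonglongrightarrow> 0"
    using assms(4) vanishing_mean_def by auto
  have "0 \<le> favg \<mu> (\<Lambda> n) f" for n
    using favg_mono[of "\<lambda>g. 0" f n] assms(1,2) by (simp add: favg_const)
  moreover have "favg \<mu> (\<Lambda> n) f \<le> favg \<mu> (\<Lambda> n) h" for n
    using favg_mono[OF assms(1) h(1) assms(3)] .
  ultimately show "(\<lambda>n. favg \<mu> (\<Lambda> n) f) \<longlonglongrightarrow> 0"
    by (intro tendsto_sandwich[OF _ _ tendsto_const h(2)]) (auto intro: always_eventually)
qed

lemma tendsto_favg_of_vanishing_mean_diff:
  fixes f h :: "'g \<Rightarrow> 'b::{banach, second_countable_topology}"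
  assumes "continuous_on UNIV f" "continuous_on UNIV h"
    and "\<And>g. norm (f g - h g) \<le> e g" "vanishing_mean e"
    and "(\<lambda>n. favg \<mu> (\<Lambda> n) h) \<longlonglongrightarrow> L"
  shows "(\<lambda>n. favg \<mu> (\<Lambda> n) f) \<longlonglongrightarrow> L"
proof -
  have "vanishing_mean (\<lambda>g. norm (f g - h g))"
    by (rule vanishing_mean_le[OF _ _ assms(3,4)]) (auto intro!: continuous_intros assms(1,2))
  hence "(\<lambda>n. favg \<mu> (\<Lambda> n) (\<lambda>g. norm (f g - h g))) \<longlonglongrightarrow> 0"
    by (simp add: vanishing_mean_def)
  hence "(\<lambda>n. favg \<mu> (\<Lambda> n) (\<lambda>g. f g - h g)) \<longlonglongrightarrow> 0"
    by (rule Lim_null_comparison[rotated]) (simp add: norm_favg_le)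
  from tendsto_favg_add[OF _ assms(2) this assms(5)] show ?thesis
    by (simp add: continuous_on_diff assms(1,2))
qed

end

locale mixing_system = gns_system sc star \<omega> \<tau> scH ip \<iota> + compact_means \<mu> \<Lambda>
  for sc :: "complex \<Rightarrow> 'a::{real_normed_algebra_1,banach} \<Rightarrow> 'a"
    and star :: "'a \<Rightarrow> 'a" and \<omega> :: "'a \<Rightarrow> complex"
    and \<tau> :: "'g::{topological_ab_group_add, t2_space, second_countable_topology} \<Rightarrow> 'a \<Rightarrow> 'a"
    and scH :: "complex \<Rightarrow> 'h::{real_normed_vector,banach} \<Rightarrow> 'h"
    and ip :: "'h \<Rightarrow> 'h \<Rightarrow> complex" and \<iota> :: "'a \<Rightarrow> 'h"
    and \<mu> :: "'g measure" and \<Lambda> :: "nat \<Rightarrow> 'g set" +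
  fixes M :: "('g \<Rightarrow> 'g) set" and k :: nat and \<phi> :: "nat \<Rightarrow> 'g \<Rightarrow> 'g"
  assumes asymptotically_abelian: "asymptotically_abelian M \<mu> \<Lambda> \<tau>"
    and translational: "translational M"
    and homomorphisms: "\<forall>\<psi>\<in>M. group_hom \<psi>"
    and phi_in_M: "\<forall>j\<in>{1..k}. \<phi> j \<in> M"
    and inj_phi: "inj_on \<phi> {1..k}"
    and mixing: "\<And>b \<psi>. \<psi> 0 = (\<lambda>g. 0) \<Longrightarrow> (\<forall>j\<in>{1..<k}. \<psi> j \<in> M) \<Longrightarrow> inj_on \<psi> {0..<k} \<Longrightarrow>
        (\<lambda>n. favg \<mu> (\<Lambda> n) (\<lambda>g. \<omega> (prod_list (map (\<lambda>j. \<tau> (\<psi> j g) (b j)) [0..<k]))))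
          \<longlonglongrightarrow> (\<Prod>j<k. \<omega> (b j))"
begin

definition orbit_prod :: "'g \<Rightarrow> (nat \<times> 'a) list \<Rightarrow> 'a" where
  "orbit_prod g xs = prod_list (map (\<lambda>(j, x). \<tau> (\<phi> j g) x) xs)"

definition norm_factors :: "(nat \<times> 'a) list \<Rightarrow> real" where
  "norm_factors xs = prod_list (map (\<lambda>(j, x). norm x) xs)"

fun commutator_bound :: "'g \<Rightarrow> nat \<Rightarrow> 'a \<Rightarrow> (nat \<times> 'a) list \<Rightarrow> real" where
  "commutator_bound g j p [] = 0"
| "commutator_bound g j p ((i, q) # B) =
     norm_factors B * norm (q * \<tau> (\<phi> j g - \<phi> i g) p - \<tau> (\<phi> j g - \<phi> i g) p * q)
     + norm q * commutator_bound g j p B"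

lemma orbit_prod_Nil[simp]: "orbit_prod g [] = 1"
  and orbit_prod_Cons[simp]: "orbit_prod g ((j, x) # xs) = \<tau> (\<phi> j g) x * orbit_prod g xs"
  and orbit_prod_append: "orbit_prod g (xs @ ys) = orbit_prod g xs * orbit_prod g ys"
  by (simp_all add: orbit_prod_def)

lemma norm_factors_Nil[simp]: "norm_factors [] = 1"
  and norm_factors_Cons[simp]: "norm_factors ((j, x) # xs) = norm x * norm_factors xs"
  by (simp_all add: norm_factors_def)

lemma norm_factors_nonneg: "norm_factors xs \<ge> 0"
  by (induction xs) auto

lemma commutator_bound_nonneg: "commutator_bound g j p B \<ge> 0"
  by (induction B rule: commutator_bound.induct[where ?a0.0 = g and ?a1.0 = j and ?a2.0 = p])
     (auto simp: norm_factors_nonneg)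

lemma star_orbit_prod: "star (orbit_prod g xs) = orbit_prod g (rev (map (\<lambda>(j, x). (j, star x)) xs))"
  by (induction xs) (auto simp: star_mult orbit_prod_append tau_star)

lemma continuous_tau_M: "\<psi> \<in> M \<Longrightarrow> continuous_on UNIV (\<lambda>g. \<tau> (\<psi> g) b)"
  using asymptotically_abelian by (simp add: asymptotically_abelian_def)

lemma continuous_orbit_prod: "fst ` set xs \<subseteq> {1..k} \<Longrightarrow> continuous_on UNIV (\<lambda>g. orbit_prod g xs)"
proof (induction xs)
  case (Cons p xs)
  then show ?case using phi_in_M
    by (cases p) (auto intro!: continuous_on_mult continuous_tau_M)
qed simp

lemma norm_gns_orbit_prod_mult_le: "norm (\<iota> (orbit_prod g xs * Q)) \<le> norm_factors xs * norm (\<iota> Q)"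
proof (induction xs arbitrary: Q)
  case (Cons p xs)
  obtain j x where p: "p = (j, x)" by (cases p)
  have "norm (\<iota> (orbit_prod g (p # xs) * Q)) = norm (\<iota> (\<tau> (\<phi> j g) x * (orbit_prod g xs * Q)))"
    by (simp add: p mult.assoc)
  also have "\<dots> \<le> norm x * norm (\<iota> (orbit_prod g xs * Q))" by (rule norm_gns_tau_mult_le)
  also have "\<dots> \<le> norm x * (norm_factors xs * norm (\<iota> Q))" by (intro mult_left_mono Cons.IH) auto
  finally show ?case by (simp add: p mult.assoc)
qed simp

text \<open>The commutator with \<open>\<tau>(\<phi>\<^sub>i g) q\<close> is the image under \<open>\<tau>(\<phi>\<^sub>i g)\<close> of a commutator in the
  relative position \<open>\<phi>\<^sub>j g - \<phi>\<^sub>i g\<close>, and applying \<open>\<tau>\<close> costs nothing in the GNS seminorm.\<close>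
lemma norm_gns_commutator_orbit_prod_le:
  "norm (\<iota> ((\<tau> (\<phi> j g) p * orbit_prod g B - orbit_prod g B * \<tau> (\<phi> j g) p) * W))
     \<le> commutator_bound g j p B * norm (\<iota> W)"
proof (induction B arbitrary: W)
  case (Cons r B)
  obtain i q where r: "r = (i, q)" by (cases r)
  define U where "U = \<tau> (\<phi> j g) p"
  define b where "b = \<tau> (\<phi> i g) q"
  define s where "s = \<phi> j g - \<phi> i g"
  define w where "w = \<tau> s p * q - q * \<tau> s p"
  have "\<tau> (\<phi> i g) (\<tau> s p) = U" by (simp add: tau_tau s_def U_def)
  hence commutator: "U * b - b * U = \<tau> (\<phi> i g) w" by (simp add: w_def tau_diff tau_mult b_def)
  have split: "(U * orbit_prod g (r # B) - orbit_prod g (r # B) * U) * W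
      = \<tau> (\<phi> i g) w * (orbit_prod g B * W) + b * ((U * orbit_prod g B - orbit_prod g B * U) * W)"
    by (simp add: r b_def[symmetric] algebra_simps flip: commutator)
  have "norm (\<iota> ((U * orbit_prod g (r # B) - orbit_prod g (r # B) * U) * W))
      \<le> norm (\<iota> (\<tau> (\<phi> i g) w * (orbit_prod g B * W)))
        + norm (\<iota> (b * ((U * orbit_prod g B - orbit_prod g B * U) * W)))"
    unfolding split gns_add by (rule norm_triangle_ineq)
  also have "\<dots> \<le> norm w * (norm_factors B * norm (\<iota> W)) + norm q * (commutator_bound g j p B * norm (\<iota> W))"
  proof (rule add_mono)
    show "norm (\<iota> (\<tau> (\<phi> i g) w * (orbit_prod g B * W))) \<le> norm w * (norm_factors B * norm (\<iota> W))"
      using norm_gns_tau_mult_le[of "\<phi> i g" w] norm_gns_orbit_prod_mult_le[of g B W]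
      by (meson mult_left_mono norm_ge_zero order_trans)
    show "norm (\<iota> (b * ((U * orbit_prod g B - orbit_prod g B * U) * W)))
        \<le> norm q * (commutator_bound g j p B * norm (\<iota> W))"
      using norm_gns_tau_mult_le[of "\<phi> i g" q] Cons.IH[of W] unfolding b_def U_def
      by (meson mult_left_mono norm_ge_zero order_trans)
  qed
  also have "\<dots> = commutator_bound g j p (r # B) * norm (\<iota> W)"
    by (simp add: r s_def[symmetric] w_def norm_minus_commute algebra_simps)
  finally show ?case unfolding U_def .
qed simp

lemma norm_gns_move_factor_le:
  "norm (\<iota> (orbit_prod g ((j, p) # B @ R)) - \<iota> (orbit_prod g (B @ (j, p) # R)))
     \<le> commutator_bound g j p B * norm_factors R"
proof -
  have "\<iota> (orbit_prod g ((j, p) # B @ R)) - \<iota> (orbit_prod g (B @ (j, p) # R))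
      = \<iota> ((\<tau> (\<phi> j g) p * orbit_prod g B - orbit_prod g B * \<tau> (\<phi> j g) p) * orbit_prod g R)"
    by (simp add: orbit_prod_append gns_diff[symmetric] algebra_simps)
  also have "norm \<dots> \<le> commutator_bound g j p B * norm (\<iota> (orbit_prod g R))"
    by (rule norm_gns_commutator_orbit_prod_le)
  also have "\<dots> \<le> commutator_bound g j p B * norm_factors R"
    using norm_gns_orbit_prod_mult_le[of g R 1] by (intro mult_left_mono commutator_bound_nonneg) simp
  finally show ?thesis .
qed

lemma vanishing_mean_commutator:
  "\<psi> \<in> M \<Longrightarrow> vanishing_mean (\<lambda>g. norm (q * \<tau> (\<psi> g) p - \<tau> (\<psi> g) p * q))"
  using asymptotically_abelian unfolding vanishing_mean_def
  by (auto simp: asymptotically_abelian_def intro!: continuous_intros continuous_tau_M)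

lemma vanishing_mean_commutator_bound:
  assumes "j \<in> {1..k}" "fst ` set B \<subseteq> {1..k} - {j}"
  shows "vanishing_mean (\<lambda>g. commutator_bound g j p B)"
  using assms(2)
proof (induction B)
  case Nil then show ?case by (simp add: vanishing_mean_zero)
next
  case (Cons r B)
  obtain i q where r: "r = (i, q)" by (cases r)
  have i: "i \<in> {1..k}" "i \<noteq> j" using Cons.prems by (auto simp: r)
  hence "\<phi> j \<noteq> \<phi> i" using inj_phi assms(1) by (metis inj_onD)
  hence "(\<lambda>g. \<phi> j g - \<phi> i g) \<in> M"
    using translational phi_in_M i assms(1) by (auto simp: translational_def)
  from vanishing_mean_commutator[OF this] Cons show ?case
    by (auto simp: r intro!: vanishing_mean_add vanishing_mean_mult_left norm_factors_nonneg)
qed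

lemma continuous_state_orbit_prod:
  "fst ` set xs \<subseteq> {1..k} \<Longrightarrow> continuous_on UNIV (\<lambda>g. \<omega> (orbit_prod g xs))"
  by (rule bounded_linear.continuous_on[OF bounded_linear_state continuous_orbit_prod])

text \<open>Translating by \<open>-\<phi>\<^sub>1 g\<close> turns the \<open>\<phi>\<^sub>j\<close> into the pairwise distinct maps \<open>\<phi>\<^sub>j - \<phi>\<^sub>1 \<in> M\<close> with
  \<open>\<phi>\<^sub>1 - \<phi>\<^sub>1 = 0\<close>, which is the form of the mixing hypothesis.\<close>
lemma tendsto_favg_state_orbit_prod:
  "(\<lambda>n. favg \<mu> (\<Lambda> n) (\<lambda>g. \<omega> (orbit_prod g (map (\<lambda>j. (j, b j)) [1..<k+1]))))
     \<longlonglongrightarrow> (\<Prod>j=1..k. \<omega> (b j))"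
proof (cases "k = 0")
  case True
  then show ?thesis by (simp add: orbit_prod_def favg_const)
next
  case False
  define \<psi> where "\<psi> j = (if j = 0 then (\<lambda>g. 0) else (\<lambda>g. \<phi> (Suc j) g - \<phi> 1 g))" for j
  have phi_ne: "\<phi> i \<noteq> \<phi> j" if "i \<in> {1..k}" "j \<in> {1..k}" "i \<noteq> j" for i j
    using inj_phi that by (metis inj_onD)
  have "\<psi> 0 = (\<lambda>g. 0)" by (simp add: \<psi>_def)
  moreover have "\<psi> j \<in> M" if "j \<in> {1..<k}" for j
    using that phi_ne[of "Suc j" 1] phi_in_M translational False
    by (auto simp: translational_def \<psi>_def)
  moreover have "inj_on \<psi> {0..<k}"
  proof (rule inj_onI, rule ccontr)
    fix i j assume ij: "i \<in> {0..<k}" "j \<in> {0..<k}" "\<psi> i = \<psi> j" "i \<noteq> j"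
    have "\<phi> (Suc i) g = \<phi> (Suc j) g" for g
      using fun_cong[OF ij(3), of g] ij(4) by (cases "i = 0"; cases "j = 0") (auto simp: \<psi>_def)
    thus False using phi_ne[of "Suc i" "Suc j"] ij by auto
  qed
  ultimately have "(\<lambda>n. favg \<mu> (\<Lambda> n) (\<lambda>g. \<omega> (prod_list (map (\<lambda>j. \<tau> (\<psi> j g) (b (Suc j))) [0..<k]))))
      \<longlonglongrightarrow> (\<Prod>j<k. \<omega> (b (Suc j)))"
    by (intro mixing) auto
  moreover have "\<omega> (orbit_prod g (map (\<lambda>j. (j, b j)) [1..<k+1]))
      = \<omega> (prod_list (map (\<lambda>j. \<tau> (\<psi> j g) (b (Suc j))) [0..<k]))" for g
  proof -
    have "[1..<k+1] = map Suc [0..<k]" by (simp add: map_Suc_upt)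
    hence "\<tau> (- \<phi> 1 g) (orbit_prod g (map (\<lambda>j. (j, b j)) [1..<k+1]))
        = prod_list (map (\<lambda>j. \<tau> (- \<phi> 1 g) (\<tau> (\<phi> (Suc j) g) (b (Suc j)))) [0..<k])"
      by (simp add: orbit_prod_def tau_prod_list o_def)
    also have "\<dots> = prod_list (map (\<lambda>j. \<tau> (\<psi> j g) (b (Suc j))) [0..<k])"
      by (intro arg_cong[where f = prod_list] map_cong refl) (auto simp: tau_tau \<psi>_def)
    finally show ?thesis by (metis state_tau)
  qed
  ultimately show ?thesis by (simp add: prod.atLeast1_atMost_eq)
qed

definition nested_factors :: "(nat \<Rightarrow> 'a) \<Rightarrow> (nat \<Rightarrow> 'a) \<Rightarrow> nat \<Rightarrow> (nat \<times> 'a) list" where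
  "nested_factors a c m = rev (map (\<lambda>j. (j, star (a j))) [1..<m+1]) @ map (\<lambda>j. (j, c j)) [1..<m+1]"

definition paired_factors :: "(nat \<Rightarrow> 'a) \<Rightarrow> (nat \<Rightarrow> 'a) \<Rightarrow> nat \<Rightarrow> (nat \<times> 'a) list" where
  "paired_factors a c m = map (\<lambda>j. (j, star (a j) * c j)) [1..<m+1]"

lemma fst_set_nested_factors: "fst ` set (nested_factors a c m) \<subseteq> {1..m}"
  and fst_set_paired_factors: "fst ` set (paired_factors a c m) \<subseteq> {1..m}"
  by (auto simp: nested_factors_def paired_factors_def)

lemma nested_factors_Suc:
  "nested_factors a c (Suc m) @ R
     = (Suc m, star (a (Suc m))) # (nested_factors a c m @ (Suc m, c (Suc m)) # R)"
  by (simp add: nested_factors_def)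

lemma paired_factors_Suc:
  "paired_factors a c (Suc m) @ R = paired_factors a c m @ (Suc m, star (a (Suc m)) * c (Suc m)) # R"
  by (simp add: paired_factors_def)

text \<open>The outermost factor \<open>star (a (m + 1))\<close> is moved past \<open>nested_factors a c m\<close>, whose indices
  all differ from \<open>m + 1\<close>, and then merged with \<open>c (m + 1)\<close>.\<close>
lemma vanishing_mean_nested_paired:
  assumes "m \<le> k" "fst ` set R \<subseteq> {1..k}"
  shows "vanishing_mean (\<lambda>g. norm (\<iota> (orbit_prod g (nested_factors a c m @ R))
                                    - \<iota> (orbit_prod g (paired_factors a c m @ R))))"
  using assms
proof (induction m arbitrary: R)
  case 0 then show ?case by (simp add: nested_factors_def paired_factors_def vanishing_mean_zero)
next
  case (Suc m)
  define p where "p = star (a (Suc m))"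
  define R1 where "R1 = (Suc m, c (Suc m)) # R"
  define R2 where "R2 = (Suc m, p * c (Suc m)) # R"
  have merge: "orbit_prod g (nested_factors a c m @ (Suc m, p) # R1) = orbit_prod g (nested_factors a c m @ R2)" for g
    by (simp add: R1_def R2_def orbit_prod_append tau_mult mult.assoc)
  have "vanishing_mean (\<lambda>g. norm_factors R1 * commutator_bound g (Suc m) p (nested_factors a c m))"
    using Suc.prems by (intro vanishing_mean_mult_left vanishing_mean_commutator_bound norm_factors_nonneg)
      (auto simp: nested_factors_def)
  moreover have "vanishing_mean (\<lambda>g. norm (\<iota> (orbit_prod g (nested_factors a c m @ R2))
                                          - \<iota> (orbit_prod g (paired_factors a c m @ R2))))"
    using Suc by (simp add: R2_def)
  ultimately have bound: "vanishing_mean (\<lambda>g. norm_factors R1 * commutator_bound g (Suc m) p (nested_factors a c m)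
      + norm (\<iota> (orbit_prod g (nested_factors a c m @ R2)) - \<iota> (orbit_prod g (paired_factors a c m @ R2))))"
    by (rule vanishing_mean_add)
  show ?case
  proof (rule vanishing_mean_le[OF _ _ _ bound])
    show "continuous_on UNIV (\<lambda>g. norm (\<iota> (orbit_prod g (nested_factors a c (Suc m) @ R))
                                      - \<iota> (orbit_prod g (paired_factors a c (Suc m) @ R))))"
      using Suc.prems
      by (intro continuous_intros bounded_linear.continuous_on[OF bounded_linear_gns] continuous_orbit_prod)
         (auto simp: nested_factors_def paired_factors_def)
    fix g
    have "norm (\<iota> (orbit_prod g (nested_factors a c (Suc m) @ R)) - \<iota> (orbit_prod g (paired_factors a c (Suc m) @ R)))
      \<le> norm (\<iota> (orbit_prod g ((Suc m, p) # nested_factors a c m @ R1))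
               - \<iota> (orbit_prod g (nested_factors a c m @ (Suc m, p) # R1)))
        + norm (\<iota> (orbit_prod g (nested_factors a c m @ R2)) - \<iota> (orbit_prod g (paired_factors a c m @ R2)))"
      unfolding nested_factors_Suc paired_factors_Suc merge p_def[symmetric] R1_def[symmetric] R2_def[symmetric]
      by (rule norm_diff_triangle_le[OF order_refl order_refl])
    also have "\<dots> \<le> norm_factors R1 * commutator_bound g (Suc m) p (nested_factors a c m)
        + norm (\<iota> (orbit_prod g (nested_factors a c m @ R2)) - \<iota> (orbit_prod g (paired_factors a c m @ R2)))"
      using norm_gns_move_factor_le by (simp add: mult.commute)
    finally show "norm (\<iota> (orbit_prod g (nested_factors a c (Suc m) @ R))
                        - \<iota> (orbit_prod g (paired_factors a c (Suc m) @ R))) \<le> \<dots>" .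
  qed simp
qed

lemma tendsto_favg_state_nested:
  "(\<lambda>n. favg \<mu> (\<Lambda> n) (\<lambda>g. \<omega> (orbit_prod g (nested_factors a c k))))
     \<longlonglongrightarrow> (\<Prod>j=1..k. \<omega> (star (a j) * c j))"
proof (rule tendsto_favg_of_vanishing_mean_diff)
  show "continuous_on UNIV (\<lambda>g. \<omega> (orbit_prod g (nested_factors a c k)))"
    and "continuous_on UNIV (\<lambda>g. \<omega> (orbit_prod g (paired_factors a c k)))"
    by (intro continuous_state_orbit_prod fst_set_nested_factors fst_set_paired_factors)+
  show "norm (\<omega> (orbit_prod g (nested_factors a c k)) - \<omega> (orbit_prod g (paired_factors a c k)))
      \<le> norm (\<iota> (orbit_prod g (nested_factors a c k)) - \<iota> (orbit_prod g (paired_factors a c k)))" for g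
    using norm_state_le_gns by (simp add: state_diff[symmetric] gns_diff[symmetric])
  show "vanishing_mean (\<lambda>g. norm (\<iota> (orbit_prod g (nested_factors a c k))
                                  - \<iota> (orbit_prod g (paired_factors a c k))))"
    using vanishing_mean_nested_paired[of k "[]"] by simp
  show "(\<lambda>n. favg \<mu> (\<Lambda> n) (\<lambda>g. \<omega> (orbit_prod g (paired_factors a c k))))
      \<longlonglongrightarrow> (\<Prod>j=1..k. \<omega> (star (a j) * c j))"
    unfolding paired_factors_def by (rule tendsto_favg_state_orbit_prod)
qed

lemma tendsto_favg_correlation:
  fixes a :: "nat \<Rightarrow> 'a" and h :: 'g
  defines "\<kappa> \<equiv> \<Prod>j=1..k. \<omega> (a j)"
  shows "(\<lambda>n. favg \<mu> (\<Lambda> n)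
            (\<lambda>g. ip (\<iota> (prod_list (map (\<lambda>j. \<tau> (\<phi> j g) (a j)) [1..<k+1])) - scH \<kappa> (\<iota> 1))
                   (\<iota> (prod_list (map (\<lambda>j. \<tau> (\<phi> j (g + h)) (a j)) [1..<k+1])) - scH \<kappa> (\<iota> 1))))
         \<longlonglongrightarrow> (\<Prod>j=1..k. \<omega> (star (a j) * \<tau> (\<phi> j h) (a j))) - complex_of_real ((cmod \<kappa>)\<^sup>2)"
proof -
  define c where "c j = \<tau> (\<phi> j h) (a j)" for j
  define xs where "xs = map (\<lambda>j. (j, a j)) [1..<k+1]"
  define cs where "cs = map (\<lambda>j. (j, c j)) [1..<k+1]"
  have indices: "fst ` set xs \<subseteq> {1..k}" "fst ` set cs \<subseteq> {1..k}"
    by (auto simp: xs_def cs_def)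
  have unshifted: "prod_list (map (\<lambda>j. \<tau> (\<phi> j g) (a j)) [1..<k+1]) = orbit_prod g xs" for g
    unfolding xs_def orbit_prod_def map_map o_def case_prod_conv ..
  have shifted: "prod_list (map (\<lambda>j. \<tau> (\<phi> j (g + h)) (a j)) [1..<k+1]) = orbit_prod g cs" for g
  proof -
    have "map (\<lambda>j. \<tau> (\<phi> j (g + h)) (a j)) [1..<k+1] = map (\<lambda>j. \<tau> (\<phi> j g) (c j)) [1..<k+1]"
      using phi_in_M homomorphisms by (intro map_cong) (auto simp: c_def tau_tau group_hom_def)
    thus ?thesis unfolding cs_def orbit_prod_def map_map o_def case_prod_conv by (rule arg_cong)
  qed
  have "star (orbit_prod g xs) * orbit_prod g cs = orbit_prod g (nested_factors a c k)" for g
    by (simp add: star_orbit_prod orbit_prod_append nested_factors_def xs_def cs_def rev_map o_def)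
  hence "(\<lambda>g. ip (\<iota> (prod_list (map (\<lambda>j. \<tau> (\<phi> j g) (a j)) [1..<k+1])) - scH \<kappa> (\<iota> 1))
                 (\<iota> (prod_list (map (\<lambda>j. \<tau> (\<phi> j (g + h)) (a j)) [1..<k+1])) - scH \<kappa> (\<iota> 1)))
      = (\<lambda>g. \<omega> (orbit_prod g (nested_factors a c k)) - \<kappa> * cnj (\<omega> (orbit_prod g xs))
             - cnj \<kappa> * \<omega> (orbit_prod g cs) + cnj \<kappa> * \<kappa>)"
    unfolding shifted unfolding unshifted ip_gns_sub_vacuum by (simp only:)
  moreover have "(\<lambda>n. favg \<mu> (\<Lambda> n) (\<lambda>g. \<omega> (orbit_prod g (nested_factors a c k)) - \<kappa> * cnj (\<omega> (orbit_prod g xs))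
                     - cnj \<kappa> * \<omega> (orbit_prod g cs) + cnj \<kappa> * \<kappa>))
      \<longlonglongrightarrow> (\<Prod>j=1..k. \<omega> (star (a j) * c j)) - \<kappa> * cnj \<kappa> - cnj \<kappa> * \<kappa> + cnj \<kappa> * \<kappa>"
  proof -
    have "(\<lambda>n. favg \<mu> (\<Lambda> n) (\<lambda>g. \<omega> (orbit_prod g xs))) \<longlonglongrightarrow> \<kappa>"
      unfolding xs_def \<kappa>_def by (rule tendsto_favg_state_orbit_prod)
    moreover have "(\<lambda>n. favg \<mu> (\<Lambda> n) (\<lambda>g. \<omega> (orbit_prod g cs))) \<longlonglongrightarrow> \<kappa>"
      using tendsto_favg_state_orbit_prod[of c] by (simp add: cs_def \<kappa>_def c_def)
    moreover have "continuous_on UNIV (\<lambda>g. \<omega> (orbit_prod g xs))"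
      and "continuous_on UNIV (\<lambda>g. \<omega> (orbit_prod g cs))"
      and "continuous_on UNIV (\<lambda>g. \<omega> (orbit_prod g (nested_factors a c k)))"
      by (intro continuous_state_orbit_prod indices fst_set_nested_factors)+
    ultimately show ?thesis
      by (intro tendsto_favg_add tendsto_favg_diff tendsto_favg_mult_left tendsto_favg_cnj
          tendsto_favg_const tendsto_favg_state_nested continuous_intros)
  qed
  moreover have "\<kappa> * cnj \<kappa> = complex_of_real ((cmod \<kappa>)\<^sup>2)"
    by (rule complex_norm_square[symmetric])
  ultimately show ?thesis by (simp add: c_def)
qed

end

theorem proposition4p4:
  fixes \<mu> :: "'g::{topological_ab_group_add, t2_space, second_countable_topology} measure"
    and \<Lambda> :: "nat \<Rightarrow> 'g set"
    and sc :: "complex \<Rightarrow> 'a::{real_normed_algebra_1, banach} \<Rightarrow> 'a"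
    and star :: "'a \<Rightarrow> 'a"
    and \<omega> :: "'a \<Rightarrow> complex"
    and \<tau> :: "'g \<Rightarrow> 'a \<Rightarrow> 'a"
    and M :: "('g \<Rightarrow> 'g) set"
    and scH :: "complex \<Rightarrow> 'h::{real_normed_vector, banach} \<Rightarrow> 'h"
    and ip :: "'h \<Rightarrow> 'h \<Rightarrow> complex"
    and \<iota> :: "'a \<Rightarrow> 'h"
    and k :: nat
    and a :: "nat \<Rightarrow> 'a"
    and \<phi> :: "nat \<Rightarrow> 'g \<Rightarrow> 'g"
  assumes lc: "locally_compact_space (euclidean :: 'g topology)"
    and haar: "haar_measure \<mu>"
    and folner: "folner_sequence \<mu> \<Lambda>"
    and dyn: "cstar_dynamical_system sc star \<omega> \<tau>"
    and Mhom: "\<forall>\<psi>\<in>M. group_hom \<psi>"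
    and asym: "asymptotically_abelian M \<mu> \<Lambda> \<tau>"
    and transl: "translational M"
    and gns: "gns_representation sc star \<omega> scH ip \<iota>"
    and mixing: "\<And>b :: nat \<Rightarrow> 'a. \<And>\<psi> :: nat \<Rightarrow> 'g \<Rightarrow> 'g.
        \<psi> 0 = (\<lambda>g. 0) \<Longrightarrow> (\<forall>j\<in>{1..<k}. \<psi> j \<in> M) \<Longrightarrow> inj_on \<psi> {0..<k} \<Longrightarrow>
        (\<lambda>n. favg \<mu> (\<Lambda> n) (\<lambda>g. \<omega> (prod_list (map (\<lambda>j. \<tau> (\<psi> j g) (b j)) [0..<k]))))
          \<longlonglongrightarrow> (\<Prod>j<k. \<omega> (b j))"
    and phiM: "\<forall>j\<in>{1..k}. \<phi> j \<in> M"
    and phi_inj: "inj_on \<phi> {1..k}"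
  shows "\<forall>h. (\<lambda>n. favg \<mu> (\<Lambda> n)
              (\<lambda>g. ip (\<iota> (prod_list (map (\<lambda>j. \<tau> (\<phi> j g) (a j)) [1..<k+1]))
                        - scH (\<Prod>j=1..k. \<omega> (a j)) (\<iota> 1))
                     (\<iota> (prod_list (map (\<lambda>j. \<tau> (\<phi> j (g + h)) (a j)) [1..<k+1]))
                        - scH (\<Prod>j=1..k. \<omega> (a j)) (\<iota> 1))))
           \<longlonglongrightarrow> (\<Prod>j=1..k. \<omega> (star (a j) * \<tau> (\<phi> j h) (a j)))
               - complex_of_real ((cmod (\<Prod>j=1..k. \<omega> (a j)))\<^sup>2)"
proof -
  have "compact_means \<mu> \<Lambda>"
    using haar folner by unfold_locales (auto simp: haar_measure_def folner_sequence_def)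
  then interpret mixing_system sc star \<omega> \<tau> scH ip \<iota> \<mu> \<Lambda> M k \<phi>
    using dyn gns asym transl Mhom phiM phi_inj mixing
    by (intro mixing_system.intro mixing_system_axioms.intro gns_system.intro) auto
  show ?thesis by (blast intro: tendsto_favg_correlation)
qed

end
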